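(* For every positive integer $t$, \[ L_{\mathcal{T}_{1/2,\,1/6}}(t) - L_{\mathcal{T}_{1/3,\,1/4}}(t) = \begin{cases} d(t) - 1, & t \equiv 4 \pmod{12},\\ d(t), & \text{otherwise,}\end{cases} \] where $d(t) = \lceil t/12 \rceil$ if $t$ is even and $d(t) = 0$ if $t$ is odd.
   Context: For $u,v>0$, $\mathcal{T}_{u,v}$ denotes the closed triangle with vertices $(0,0)$, $(u,0)$, $(0,v)$, and its Ehrhart function is $L_{\mathcal{T}_{u,v}}(t) = \#\left(\mathbb{Z}^2 \cap \mathcal{T}_{tu,tv}\right)$ for positive integers $t$. *)

theory Defs
  imports Complex_Main
begin

definition triangle :: "real \<Rightarrow> real \<Rightarrow> (real \<times> real) set" where
  "triangle u v = {(x, y). 0 \<le> x \<and> 0 \<le> y \<and> x / u + y / v \<le> 1}"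

definition ehrhart_tri :: "real \<Rightarrow> real \<Rightarrow> nat \<Rightarrow> nat" where
  "ehrhart_tri u v t =
     card {(a :: int, b :: int). (real_of_int a, real_of_int b) \<in> triangle (real t * u) (real t * v)}"

end

theory Submission
  imports Defs
begin

text \<open>
  After scaling, the integer points of \<open>t T(1/p, 1/q)\<close> are the pairs of naturals with
  \<open>p a + q b \<le> t\<close>. Sorting them by \<open>b\<close> gives the recursion
  \<open>L(t) = \<lfloor>t/p\<rfloor> + 1 + L(t - q)\<close>. Unfolding it over the common period \<open>12\<close> of
  \<open>(p, q) = (2, 6)\<close> and \<open>(3, 4)\<close> shows that the two counts grow by \<open>t + 11\<close> resp.
  \<open>t + 10\<close> for even \<open>t\<close> and both by \<open>t + 10\<close> for odd \<open>t\<close>, so the difference grows by one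
  per period exactly for even \<open>t\<close>. The closed form follows by induction from the twelve
  initial values.
\<close>

definition lattice_triangle :: "nat \<Rightarrow> nat \<Rightarrow> nat \<Rightarrow> (nat \<times> nat) set" where
  "lattice_triangle p q t = {(a, b). p * a + q * b \<le> t}"

lemma lattice_triangle_subset_atMost:
  assumes "0 < p" "0 < q"
  shows "lattice_triangle p q t \<subseteq> {..t} \<times> {..t}"
proof (rule subrelI)
  fix a b assume "(a, b) \<in> lattice_triangle p q t"
  then have "p * a + q * b \<le> t" by (simp add: lattice_triangle_def)
  moreover have "a \<le> p * a" "b \<le> q * b" using assms by simp_all
  ultimately have "a \<le> t" "b \<le> t" by linarith+
  then show "(a, b) \<in> {..t} \<times> {..t}" by simp
qed

lemma finite_lattice_triangle:
  assumes "0 < p" "0 < q"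
  shows "finite (lattice_triangle p q t)"
  using finite_subset[OF lattice_triangle_subset_atMost[OF assms]] by blast

lemma lattice_triangle_decompose:
  assumes "0 < p" "0 < q"
  shows "lattice_triangle p q t = (\<lambda>a. (a, 0)) ` {..t div p}
           \<union> (if q \<le> t then (\<lambda>(a, b). (a, Suc b)) ` lattice_triangle p q (t - q) else {})"
    (is "_ = ?bottom \<union> ?rest")
proof (intro set_eqI iffI)
  fix x assume "x \<in> lattice_triangle p q t"
  then obtain a b where x: "x = (a, b)" and le: "p * a + q * b \<le> t"
    by (auto simp: lattice_triangle_def)
  show "x \<in> ?bottom \<union> ?rest"
  proof (cases b)
    case 0
    with le assms show ?thesis by (auto simp: x less_eq_div_iff_mult_less_eq mult.commute)
  next
    case (Suc c)
    with le have "q \<le> t" "p * a + q * c \<le> t - q" by simp_all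
    with Suc show ?thesis by (force simp: x lattice_triangle_def)
  qed
next
  fix x assume "x \<in> ?bottom \<union> ?rest"
  with assms show "x \<in> lattice_triangle p q t"
    by (auto simp: lattice_triangle_def less_eq_div_iff_mult_less_eq mult.commute split: if_splits)
qed

lemma card_lattice_triangle_rec:
  assumes "0 < p" "0 < q"
  shows "card (lattice_triangle p q t)
           = t div p + 1 + (if q \<le> t then card (lattice_triangle p q (t - q)) else 0)"
proof -
  have "inj_on (\<lambda>a::nat. (a, 0::nat)) A" "inj_on (\<lambda>(a::nat, b). (a, Suc b)) B" for A B
    by (auto simp: inj_on_def)
  moreover have "(\<lambda>a. (a, 0)) ` {..t div p} \<inter> (\<lambda>(a, b). (a, Suc b)) ` A = {}" for A
    by auto
  ultimately show ?thesis
    using finite_lattice_triangle[OF assms]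
    by (subst lattice_triangle_decompose[OF assms])
       (simp add: card_Un_disjoint card_image)
qed

lemma card_lattice_triangle_add:
  assumes "0 < p" "0 < q"
  shows "card (lattice_triangle p q (t + q)) = card (lattice_triangle p q t) + (t + q) div p + 1"
  using card_lattice_triangle_rec[OF assms, of "t + q"] by simp

lemma of_nat_pair_in_triangle_iff:
  assumes "0 < t" "0 < p" "0 < q"
  shows "(real m, real n) \<in> triangle (real t * (1 / real p)) (real t * (1 / real q))
           \<longleftrightarrow> p * m + q * n \<le> t"
proof -
  have "real m / (real t * (1 / real p)) + real n / (real t * (1 / real q))
          = real (p * m + q * n) / real t"
    using assms by (simp add: field_simps)
  then show ?thesis
    using assms by (simp add: triangle_def divide_le_eq_1 del: of_nat_add of_nat_mult)
qed

lemma ehrhart_tri_eq_card_lattice_triangle: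
  assumes "0 < t" "0 < p" "0 < q"
  shows "ehrhart_tri (1 / real p) (1 / real q) t = card (lattice_triangle p q t)"
proof -
  let ?T = "triangle (real t * (1 / real p)) (real t * (1 / real q))"
  have "{(a :: int, b :: int). (real_of_int a, real_of_int b) \<in> ?T}
          = (\<lambda>(m, n). (int m, int n)) ` lattice_triangle p q t"
  proof (intro set_eqI iffI)
    fix x assume "x \<in> {(a, b). (real_of_int a, real_of_int b) \<in> ?T}"
    then obtain a b where x: "x = (a, b)" and in_T: "(real_of_int a, real_of_int b) \<in> ?T"
      by auto
    then have "0 \<le> a" "0 \<le> b" by (auto simp: triangle_def)
    then have "x = (int (nat a), int (nat b))"
      and "(real (nat a), real (nat b)) \<in> ?T"
      using x in_T by simp_all
    then show "x \<in> (\<lambda>(m, n). (int m, int n)) ` lattice_triangle p q t"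
      using of_nat_pair_in_triangle_iff[OF assms] by (force simp: lattice_triangle_def)
  next
    fix x assume "x \<in> (\<lambda>(m, n). (int m, int n)) ` lattice_triangle p q t"
    then show "x \<in> {(a, b). (real_of_int a, real_of_int b) \<in> ?T}"
      using of_nat_pair_in_triangle_iff[OF assms] by (auto simp: lattice_triangle_def)
  qed
  moreover have "inj (\<lambda>(m :: nat, n :: nat). (int m, int n))"
    by (auto simp: inj_def)
  ultimately show ?thesis
    unfolding ehrhart_tri_def by (simp add: card_image inj_on_subset)
qed

lemma card_lattice_triangle_2_6_add_12:
  "card (lattice_triangle 2 6 (t + 12))
     = card (lattice_triangle 2 6 t) + t + 10 + (if even t then 1 else 0)"
proof -
  have "(t + 12) div 2 + (t + 6) div 2 + 2 = t + 10 + (if even t then 1 else 0)"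
    by (cases "even t") (auto elim!: evenE oddE)
  moreover have "card (lattice_triangle 2 6 (t + 12))
                   = card (lattice_triangle 2 6 (t + 6)) + (t + 12) div 2 + 1"
    using card_lattice_triangle_add[of 2 6 "t + 6"] by (simp add: add.assoc)
  ultimately show ?thesis
    using card_lattice_triangle_add[of 2 6 t] by simp
qed

lemma card_lattice_triangle_3_4_add_12:
  "card (lattice_triangle 3 4 (t + 12)) = card (lattice_triangle 3 4 t) + t + 10"
proof -
  obtain k r where t: "t = 3 * k + r" and "r < 3"
    using div_mult_mod_eq[of t 3] mod_less_divisor[of 3 t]
    by (metis mult.commute zero_less_numeral)
  then have "r = 0 \<or> r = 1 \<or> r = 2" by linarith
  then have "(t + 12) div 3 + (t + 8) div 3 + (t + 4) div 3 + 3 = t + 10"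
    unfolding t by (elim disjE) simp_all
  moreover have "card (lattice_triangle 3 4 (t + 12))
                   = card (lattice_triangle 3 4 (t + 8)) + (t + 12) div 3 + 1"
    using card_lattice_triangle_add[of 3 4 "t + 8"] by (simp add: add.assoc)
  moreover have "card (lattice_triangle 3 4 (t + 8))
                   = card (lattice_triangle 3 4 (t + 4)) + (t + 8) div 3 + 1"
    using card_lattice_triangle_add[of 3 4 "t + 4"] by (simp add: add.assoc)
  ultimately show ?thesis
    using card_lattice_triangle_add[of 3 4 t] by simp
qed

lemma lattice_triangle_difference_less_12:
  assumes "t < 12"
  shows "int (card (lattice_triangle 2 6 t)) - int (card (lattice_triangle 3 4 t))
     = (if t mod 12 = 4 then (if even t then \<lceil>real t / 12\<rceil> else 0) - 1
        else (if even t then \<lceil>real t / 12\<rceil> else 0))"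
proof -
  from assms have "t = 0 \<or> t = 1 \<or> t = 2 \<or> t = 3 \<or> t = 4 \<or> t = 5 \<or> t = 6
      \<or> t = 7 \<or> t = 8 \<or> t = 9 \<or> t = 10 \<or> t = 11"
    by presburger
  then show ?thesis
    by (elim disjE) (simp_all add: card_lattice_triangle_rec, simp_all add: ceiling_eq_iff)
qed

lemma lattice_triangle_difference:
  "int (card (lattice_triangle 2 6 t)) - int (card (lattice_triangle 3 4 t))
     = (if t mod 12 = 4 then (if even t then \<lceil>real t / 12\<rceil> else 0) - 1
        else (if even t then \<lceil>real t / 12\<rceil> else 0))"
proof (induction t rule: less_induct)
  case (less t)
  show ?case
  proof (cases "t < 12")
    case True
    then show ?thesis by (rule lattice_triangle_difference_less_12)
  next
    case False
    define s where "s = t - 12"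
    with False have t: "t = s + 12" by simp
    have "int (card (lattice_triangle 2 6 t)) - int (card (lattice_triangle 3 4 t))
            = int (card (lattice_triangle 2 6 s)) - int (card (lattice_triangle 3 4 s))
              + (if even s then 1 else 0)"
      by (simp add: t card_lattice_triangle_2_6_add_12 card_lattice_triangle_3_4_add_12)
    moreover have "\<lceil>real t / 12\<rceil> = \<lceil>real s / 12\<rceil> + 1"
      using ceiling_add_one[of "real s / 12"] by (simp add: t add_divide_distrib)
    moreover have "t mod 12 = s mod 12" "even t \<longleftrightarrow> even s"
      by (simp_all add: t)
    ultimately show ?thesis
      using less.IH[of s] t by simp
  qed
qed

theorem mainTheorem13:
  fixes t :: nat
  assumes "t \<ge> 1"
  defines "d \<equiv> (if even t then \<lceil>real t / 12\<rceil> else 0)"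
  shows "int (ehrhart_tri (1/2) (1/6) t) - int (ehrhart_tri (1/3) (1/4) t)
           = (if t mod 12 = 4 then d - 1 else d)"
proof -
  have "ehrhart_tri (1/2) (1/6) t = card (lattice_triangle 2 6 t)"
    using ehrhart_tri_eq_card_lattice_triangle[of t 2 6] assms by simp
  moreover have "ehrhart_tri (1/3) (1/4) t = card (lattice_triangle 3 4 t)"
    using ehrhart_tri_eq_card_lattice_triangle[of t 3 4] assms by simp
  ultimately show ?thesis
    unfolding d_def using lattice_triangle_difference[of t] by simp
qed

end
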